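(* Let $\mathcal{F}$ be a Fraïssé class with hereditary canonical disjoint amalgamation, let $X$ be its Fraïssé limit, let $\Gamma$ be the automorphism group of $X$ acting by application, and let $I$ be the ideal of finite subsets of $X$. Then $\Gamma\curvearrowright X, I$ is a simple dynamical ideal.
   Context: For a group $\Gamma$ acting on $X$ and $a\subseteq X$, $\mathrm{pstab}(a)=\{\gamma\in\Gamma:\gamma\cdot x=x\ \forall x\in a\}$. A dynamical ideal $\Gamma\curvearrowright X, I$ (a $\Gamma$-invariant ideal containing all singletons) is simple if for all $a\subseteq b$ in $I$, the only normal subgroup of $\mathrm{pstab}(a)$ containing $\mathrm{pstab}(b)$ is $\mathrm{pstab}(a)$ itself. For structures, the algebraic closure of a set is its closure under all functions of the structure. Two $\mathcal{F}$-structures $A,B$ are in amalgamation position if they induce the same substructure on $\mathrm{dom}(A)\cap\mathrm{dom}(B)$; a disjoint amalgamation of them is a structure in $\mathcal{F}$ with domain containing $\mathrm{dom}(A)\cup\mathrm{dom}(B)$ inducing $A$ and $B$ on their domains, and it is minimal if it is generated (is the algebraic closure of) $\mathrm{dom}(A)\cup\mathrm{dom}(B)$. $\mathcal F$ (a Fraïssé class with disjoint amalgamation) has hereditary canonical amalgamation if there is a function $C$ assigning to each pair $\langle A,B\rangle$ of $\mathcal{F}$-structures in amalgamation position a minimal disjoint amalgamation $C(A,B)$ such that: (1) (invariance) if $\phi:A\to A'$, $\psi:B\to B'$ are isomorphisms agreeing on $\mathrm{dom}(A)\cap\mathrm{dom}(B)$ (with $A',B'$ in amalgamation position), then there is an isomorphism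 of $C(A,B)$ onto $C(A',B')$ extending $\phi\cup\psi$; (2) (heredity in the left variable) if $A'$ is an induced substructure of $A$ with $\mathrm{dom}(A)\cap\mathrm{dom}(B)\subseteq\mathrm{dom}(A')$, then $C(A',B)$ is isomorphic to the substructure of $C(A,B)$ on the algebraic closure of $\mathrm{dom}(A')\cup\mathrm{dom}(B)$ via an isomorphism that is the identity on $\mathrm{dom}(A')\cup\mathrm{dom}(B)$. *)

theory Defs
  imports "HOL-Algebra.Coset" "HOL-Library.Countable_Set"
begin

text \<open>A signature is given by arity functions rar (relation symbols 'r) and
far (function symbols 'f). A structure has a domain, relation and function
interpretations; only the values on tuples from the domain matter.\<close>

record ('a, 'r, 'f) struc =
  sdom :: "'a set"
  srel :: "'r \<Rightarrow> 'a list \<Rightarrow> bool"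
  sfun :: "'f \<Rightarrow> 'a list \<Rightarrow> 'a"

definition tuples :: "('s \<Rightarrow> nat) \<Rightarrow> 's \<Rightarrow> 'a set \<Rightarrow> 'a list set" where
  "tuples ar s S = {xs. length xs = ar s \<and> set xs \<subseteq> S}"

definition closed_under :: "('f \<Rightarrow> nat) \<Rightarrow> ('a,'r,'f) struc \<Rightarrow> 'a set \<Rightarrow> bool" where
  "closed_under far M S \<longleftrightarrow> (\<forall>f. \<forall>xs \<in> tuples far f S. sfun M f xs \<in> S)"

definition is_struct :: "('f \<Rightarrow> nat) \<Rightarrow> ('a,'r,'f) struc \<Rightarrow> bool" where
  "is_struct far M \<longleftrightarrow> closed_under far M (sdom M)"

inductive_set acl :: "('f \<Rightarrow> nat) \<Rightarrow> ('a,'r,'f) struc \<Rightarrow> 'a set \<Rightarrow> 'a set"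
  for far M S where
  base: "x \<in> S \<Longrightarrow> x \<in> acl far M S"
| step: "length xs = far f \<Longrightarrow> \<forall>y\<in>set xs. y \<in> acl far M S \<Longrightarrow> sfun M f xs \<in> acl far M S"

definition restr :: "('a,'r,'f) struc \<Rightarrow> 'a set \<Rightarrow> ('a,'r,'f) struc" where
  "restr M T = M\<lparr>sdom := T\<rparr>"

definition embedding :: "('r \<Rightarrow> nat) \<Rightarrow> ('f \<Rightarrow> nat) \<Rightarrow> ('a \<Rightarrow> 'b)
    \<Rightarrow> ('a,'r,'f) struc \<Rightarrow> ('b,'r,'f) struc \<Rightarrow> bool" where
  "embedding rar far e A B \<longleftrightarrow>
     inj_on e (sdom A) \<and> e ` sdom A \<subseteq> sdom B \<and>
     (\<forall>r. \<forall>xs \<in> tuples rar r (sdom A). srel B r (map e xs) = srel A r xs) \<and>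
     (\<forall>f. \<forall>xs \<in> tuples far f (sdom A). sfun B f (map e xs) = e (sfun A f xs))"

definition siso :: "('r \<Rightarrow> nat) \<Rightarrow> ('f \<Rightarrow> nat) \<Rightarrow> ('a \<Rightarrow> 'b)
    \<Rightarrow> ('a,'r,'f) struc \<Rightarrow> ('b,'r,'f) struc \<Rightarrow> bool" where
  "siso rar far e A B \<longleftrightarrow> embedding rar far e A B \<and> e ` sdom A = sdom B"

definition induced_sub :: "('r \<Rightarrow> nat) \<Rightarrow> ('f \<Rightarrow> nat)
    \<Rightarrow> ('a,'r,'f) struc \<Rightarrow> ('a,'r,'f) struc \<Rightarrow> bool" where
  "induced_sub rar far A B \<longleftrightarrow> is_struct far A \<and> sdom A \<subseteq> sdom B \<and>
     (\<forall>r. \<forall>xs \<in> tuples rar r (sdom A). srel A r xs = srel B r xs) \<and>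
     (\<forall>f. \<forall>xs \<in> tuples far f (sdom A). sfun A f xs = sfun B f xs)"

definition amalg_pos :: "('r \<Rightarrow> nat) \<Rightarrow> ('f \<Rightarrow> nat)
    \<Rightarrow> ('a,'r,'f) struc \<Rightarrow> ('a,'r,'f) struc \<Rightarrow> bool" where
  "amalg_pos rar far A B \<longleftrightarrow>
     (\<forall>r. \<forall>xs \<in> tuples rar r (sdom A \<inter> sdom B). srel A r xs = srel B r xs) \<and>
     (\<forall>f. \<forall>xs \<in> tuples far f (sdom A \<inter> sdom B). sfun A f xs = sfun B f xs)"

definition fraisse_class :: "('r \<Rightarrow> nat) \<Rightarrow> ('f \<Rightarrow> nat) \<Rightarrow> (nat,'r,'f) struc set \<Rightarrow> bool" where
  "fraisse_class rar far F \<longleftrightarrow>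
     F \<noteq> {} \<and>
     (\<forall>A\<in>F. is_struct far A \<and> finite (sdom A)) \<and>
     (\<forall>A\<in>F. \<forall>B e. is_struct far B \<and> siso rar far e A B \<longrightarrow> B \<in> F) \<and>
     (\<forall>A\<in>F. \<forall>T. T \<subseteq> sdom A \<and> closed_under far A T \<longrightarrow> restr A T \<in> F) \<and>
     (\<forall>A\<in>F. \<forall>B\<in>F. \<exists>D\<in>F. \<exists>g1 g2. embedding rar far g1 A D \<and> embedding rar far g2 B D) \<and>
     (\<forall>A\<in>F. \<forall>B\<in>F. \<forall>C\<in>F. \<forall>e1 e2. embedding rar far e1 A B \<and> embedding rar far e2 A C \<longrightarrow>
        (\<exists>D\<in>F. \<exists>g1 g2. embedding rar far g1 B D \<and> embedding rar far g2 C D \<and>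
           (\<forall>x\<in>sdom A. g1 (e1 x) = g2 (e2 x)))) \<and>
     (\<exists>S. countable S \<and> S \<subseteq> F \<and> (\<forall>A\<in>F. \<exists>B\<in>S. \<exists>e. siso rar far e A B))"

definition is_amalgamation :: "('r \<Rightarrow> nat) \<Rightarrow> ('f \<Rightarrow> nat) \<Rightarrow> (nat,'r,'f) struc set
    \<Rightarrow> (nat,'r,'f) struc \<Rightarrow> (nat,'r,'f) struc \<Rightarrow> (nat,'r,'f) struc \<Rightarrow> bool" where
  "is_amalgamation rar far F A B D \<longleftrightarrow> D \<in> F \<and> sdom A \<union> sdom B \<subseteq> sdom D \<and>
     induced_sub rar far A D \<and> induced_sub rar far B D"

definition minimal_amalgamation :: "('r \<Rightarrow> nat) \<Rightarrow> ('f \<Rightarrow> nat) \<Rightarrow> (nat,'r,'f) struc set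
    \<Rightarrow> (nat,'r,'f) struc \<Rightarrow> (nat,'r,'f) struc \<Rightarrow> (nat,'r,'f) struc \<Rightarrow> bool" where
  "minimal_amalgamation rar far F A B D \<longleftrightarrow> is_amalgamation rar far F A B D \<and>
     sdom D = acl far D (sdom A \<union> sdom B)"

definition disjoint_amalgamation :: "('r \<Rightarrow> nat) \<Rightarrow> ('f \<Rightarrow> nat) \<Rightarrow> (nat,'r,'f) struc set \<Rightarrow> bool" where
  "disjoint_amalgamation rar far F \<longleftrightarrow>
     (\<forall>A\<in>F. \<forall>B\<in>F. amalg_pos rar far A B \<longrightarrow> (\<exists>D. is_amalgamation rar far F A B D))"

definition hereditary_canonical_amalgamation :: "('r \<Rightarrow> nat) \<Rightarrow> ('f \<Rightarrow> nat) \<Rightarrow> (nat,'r,'f) struc set \<Rightarrow> bool" where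
  "hereditary_canonical_amalgamation rar far F \<longleftrightarrow>
    (\<exists>C. (\<forall>A\<in>F. \<forall>B\<in>F. amalg_pos rar far A B \<longrightarrow> minimal_amalgamation rar far F A B (C A B)) \<and>
      \<comment> \<open>invariance\<close>
      (\<forall>A\<in>F. \<forall>B\<in>F. \<forall>A'\<in>F. \<forall>B'\<in>F. \<forall>\<phi> \<psi>.
         amalg_pos rar far A B \<and> amalg_pos rar far A' B' \<and>
         siso rar far \<phi> A A' \<and> siso rar far \<psi> B B' \<and>
         (\<forall>x \<in> sdom A \<inter> sdom B. \<phi> x = \<psi> x) \<and>
         \<phi> ` (sdom A \<inter> sdom B) = sdom A' \<inter> sdom B' \<longrightarrow>
         (\<exists>\<theta>. siso rar far \<theta> (C A B) (C A' B') \<and> (\<forall>x\<in>sdom A. \<theta> x = \<phi> x) \<and>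
               (\<forall>x\<in>sdom B. \<theta> x = \<psi> x))) \<and>
      \<comment> \<open>heredity in the left variable\<close>
      (\<forall>A\<in>F. \<forall>B\<in>F. \<forall>A'\<in>F.
         amalg_pos rar far A B \<and> induced_sub rar far A' A \<and> sdom A \<inter> sdom B \<subseteq> sdom A' \<longrightarrow>
         (\<exists>\<theta>. siso rar far \<theta> (C A' B)
                 (restr (C A B) (acl far (C A B) (sdom A' \<union> sdom B))) \<and>
               (\<forall>x \<in> sdom A' \<union> sdom B. \<theta> x = x))))"

definition ultrahomogeneous :: "('r \<Rightarrow> nat) \<Rightarrow> ('f \<Rightarrow> nat) \<Rightarrow> ('a,'r,'f) struc \<Rightarrow> bool" where
  "ultrahomogeneous rar far X \<longleftrightarrow>
     (\<forall>S T \<phi>. finite S \<and> finite T \<and> S \<subseteq> sdom X \<and> T \<subseteq> sdom X \<and>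
        siso rar far \<phi> (restr X (acl far X S)) (restr X (acl far X T)) \<longrightarrow>
        (\<exists>\<psi>. siso rar far \<psi> X X \<and> (\<forall>x \<in> acl far X S. \<psi> x = \<phi> x)))"

text \<open>X is a Fraisse limit of F: a countable (domain in nat) structure whose age
(finitely generated substructures, up to isomorphism) is F, and which is ultrahomogeneous.\<close>
definition fraisse_limit :: "('r \<Rightarrow> nat) \<Rightarrow> ('f \<Rightarrow> nat) \<Rightarrow> (nat,'r,'f) struc set
    \<Rightarrow> (nat,'r,'f) struc \<Rightarrow> bool" where
  "fraisse_limit rar far F X \<longleftrightarrow> is_struct far X \<and>
     (\<forall>S. finite S \<and> S \<subseteq> sdom X \<longrightarrow> restr X (acl far X S) \<in> F) \<and>
     (\<forall>A\<in>F. \<exists>e. embedding rar far e A X) \<and>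
     ultrahomogeneous rar far X"

definition aut_group :: "('r \<Rightarrow> nat) \<Rightarrow> ('f \<Rightarrow> nat) \<Rightarrow> ('a,'r,'f) struc \<Rightarrow> ('a \<Rightarrow> 'a) monoid" where
  "aut_group rar far X =
     \<lparr>carrier = {g. siso rar far g X X \<and> (\<forall>x. x \<notin> sdom X \<longrightarrow> g x = x)},
      mult = (\<lambda>g h. g \<circ> h), one = id\<rparr>"

definition group_act :: "('g, 'm) monoid_scheme \<Rightarrow> 'x set \<Rightarrow> ('g \<Rightarrow> 'x \<Rightarrow> 'x) \<Rightarrow> bool" where
  "group_act G X act \<longleftrightarrow> group G \<and>
     (\<forall>g\<in>carrier G. bij_betw (act g) X X) \<and>
     (\<forall>x\<in>X. act (one G) x = x) \<and>
     (\<forall>g\<in>carrier G. \<forall>h\<in>carrier G. \<forall>x\<in>X. act (mult G g h) x = act g (act h x))"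

definition ideal_on :: "'x set \<Rightarrow> 'x set set \<Rightarrow> bool" where
  "ideal_on X I \<longleftrightarrow> I \<subseteq> Pow X \<and> {} \<in> I \<and>
     (\<forall>a\<in>I. \<forall>b. b \<subseteq> a \<longrightarrow> b \<in> I) \<and> (\<forall>a\<in>I. \<forall>b\<in>I. a \<union> b \<in> I)"

definition dynamical_ideal :: "('g, 'm) monoid_scheme \<Rightarrow> 'x set \<Rightarrow> ('g \<Rightarrow> 'x \<Rightarrow> 'x) \<Rightarrow> 'x set set \<Rightarrow> bool" where
  "dynamical_ideal G X act I \<longleftrightarrow> group_act G X act \<and> ideal_on X I \<and>
     (\<forall>g\<in>carrier G. \<forall>a\<in>I. act g ` a \<in> I) \<and> (\<forall>x\<in>X. {x} \<in> I)"

definition pstab :: "('g, 'm) monoid_scheme \<Rightarrow> ('g \<Rightarrow> 'x \<Rightarrow> 'x) \<Rightarrow> 'x set \<Rightarrow> 'g set" where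
  "pstab G act a = {g \<in> carrier G. \<forall>x\<in>a. act g x = x}"

definition simple_dynamical_ideal :: "('g, 'm) monoid_scheme \<Rightarrow> 'x set \<Rightarrow> ('g \<Rightarrow> 'x \<Rightarrow> 'x) \<Rightarrow> 'x set set \<Rightarrow> bool" where
  "simple_dynamical_ideal G X act I \<longleftrightarrow> dynamical_ideal G X act I \<and>
     (\<forall>a\<in>I. \<forall>b\<in>I. a \<subseteq> b \<longrightarrow>
        (\<forall>N. normal N (G\<lparr>carrier := pstab G act a\<rparr>) \<and> pstab G act b \<subseteq> N \<longrightarrow> N = pstab G act a))"

end

theory Submission
  imports Defs
begin

text \<open>Let \<open>a \<subseteq> b\<close> be finite and \<open>N\<close> a normal subgroup of \<open>pstab a\<close> containing \<open>pstab b\<close>. For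
  \<open>g \<in> pstab a\<close> it suffices to find \<open>h, k \<in> pstab a\<close> with \<open>h = g\<close> on \<open>b\<close> and \<open>h\<close> fixing \<open>k b\<close>
  pointwise: then \<open>k\<^sup>-\<^sup>1 h k\<close> and \<open>g\<^sup>-\<^sup>1 h\<close> fix \<open>b\<close>, so \<open>h \<in> N\<close> by normality and hence \<open>g \<in> N\<close>.
  To find \<open>h\<close> and \<open>k\<close>, let \<open>K\<^sub>1 = acl b\<close> and \<open>K\<^sub>0 = acl (b \<union> g b)\<close>, take a copy \<open>B\<close> of \<open>K\<^sub>1\<close>
  over \<open>acl a\<close> meeting \<open>K\<^sub>0\<close> only in \<open>acl a\<close>, and embed the canonical amalgam \<open>C K\<^sub>0 B\<close> into
  \<open>X\<close> over \<open>K\<^sub>0\<close>. By invariance and heredity, the substructures generated by \<open>K\<^sub>1 \<union> B\<close> and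
  \<open>g K\<^sub>1 \<union> B\<close> are isomorphic via \<open>g \<union> id\<close>; ultrahomogeneity extends this isomorphism to \<open>h\<close>,
  and the copying map \<open>K\<^sub>1 \<rightarrow> B\<close> to \<open>k\<close>.\<close>

lemma sdom_restr [simp]: "sdom (restr M T) = T"
  and srel_restr [simp]: "srel (restr M T) = srel M"
  and sfun_restr [simp]: "sfun (restr M T) = sfun M"
  by (simp_all add: restr_def)

lemma restr_sdom [simp]: "restr M (sdom M) = M"
  by (simp add: restr_def)

lemma restr_restr [simp]: "restr (restr M S) T = restr M T"
  by (simp add: restr_def)

lemma closed_under_restr [simp]: "closed_under far (restr M T) = closed_under far M"
  by (simp add: closed_under_def fun_eq_iff)

lemma is_struct_restr_iff [simp]: "is_struct far (restr M T) \<longleftrightarrow> closed_under far M T"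
  by (simp add: is_struct_def)

lemma tuples_set_subset: "xs \<in> tuples ar s S \<Longrightarrow> set xs \<subseteq> S"
  by (simp add: tuples_def)

lemma map_in_tuples: "xs \<in> tuples ar s S \<Longrightarrow> e ` S \<subseteq> T \<Longrightarrow> map e xs \<in> tuples ar s T"
  by (auto simp: tuples_def)

lemma map_cong_tuples: "xs \<in> tuples ar s S \<Longrightarrow> \<forall>x\<in>S. e x = e' x \<Longrightarrow> map e xs = map e' xs"
  by (auto simp: tuples_def)

lemma tuples_mono: "xs \<in> tuples ar s S \<Longrightarrow> S \<subseteq> T \<Longrightarrow> xs \<in> tuples ar s T"
  by (auto simp: tuples_def)

subsection \<open>Algebraic closure\<close>

lemma acl_superset: "S \<subseteq> acl far M S"
  by (auto intro: acl.base)

lemma closed_under_acl: "closed_under far M (acl far M S)"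
  unfolding closed_under_def tuples_def by (auto intro: acl.step)

lemma acl_least:
  assumes "closed_under far M T" "S \<subseteq> T"
  shows "acl far M S \<subseteq> T"
proof
  fix x assume "x \<in> acl far M S"
  then show "x \<in> T"
  proof induction
    case (step xs f)
    then have "set xs \<subseteq> T" by blast
    with step.hyps(1) assms(1) show ?case by (auto simp: closed_under_def tuples_def)
  qed (use assms in blast)
qed

lemma acl_mono: "S \<subseteq> T \<Longrightarrow> acl far M S \<subseteq> acl far M T"
  by (meson acl_superset closed_under_acl acl_least order_trans)

lemma acl_eq_if_closed: "closed_under far M T \<Longrightarrow> acl far M T = T"
  by (simp add: acl_superset acl_least subset_antisym)

lemma acl_subset_sdom: "is_struct far M \<Longrightarrow> S \<subseteq> sdom M \<Longrightarrow> acl far M S \<subseteq> sdom M"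
  by (simp add: acl_least is_struct_def)

subsection \<open>Embeddings and isomorphisms\<close>

lemma embeddingD:
  assumes "embedding rar far e A B"
  shows "inj_on e (sdom A)" "e ` sdom A \<subseteq> sdom B"
    "xs \<in> tuples rar r (sdom A) \<Longrightarrow> srel B r (map e xs) = srel A r xs"
    "ys \<in> tuples far f (sdom A) \<Longrightarrow> sfun B f (map e ys) = e (sfun A f ys)"
  using assms unfolding embedding_def by blast+

lemma siso_embedding: "siso rar far e A B \<Longrightarrow> embedding rar far e A B"
  by (simp add: siso_def)

lemma siso_image: "siso rar far e A B \<Longrightarrow> e ` sdom A = sdom B"
  by (simp add: siso_def)

lemma tuples_image_map:
  assumes "xs \<in> tuples ar s (e ` T)"
  obtains ys where "ys \<in> tuples ar s T" "xs = map e ys"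
proof -
  have "xs \<in> lists (e ` T)" using assms by (simp add: tuples_def lists_eq_set)
  then obtain ys where "ys \<in> lists T" "xs = map e ys" by (auto simp: lists_image)
  with assms show thesis by (intro that) (auto simp: tuples_def lists_eq_set)
qed

lemma closed_under_image:
  assumes e: "embedding rar far e D X" and K: "closed_under far D K" "K \<subseteq> sdom D"
  shows "closed_under far X (e ` K)"
  unfolding closed_under_def
proof (intro allI ballI)
  fix f xs assume "xs \<in> tuples far f (e ` K)"
  then obtain ys where ys: "ys \<in> tuples far f K" "xs = map e ys" by (rule tuples_image_map)
  then have "sfun D f ys \<in> K" using K(1) by (simp add: closed_under_def)
  moreover have "ys \<in> tuples far f (sdom D)" using tuples_mono[OF ys(1) K(2)] .
  ultimately show "sfun X f xs \<in> e ` K" using embeddingD(4)[OF e] ys(2) by simp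
qed

lemma embedding_image_acl:
  assumes e: "embedding rar far e A B" and st: "is_struct far A" and S: "S \<subseteq> sdom A"
  shows "e ` acl far A S = acl far B (e ` S)"
proof
  have dom: "acl far A S \<subseteq> sdom A" using acl_subset_sdom[OF st S] .
  have "e x \<in> acl far B (e ` S)" if "x \<in> acl far A S" for x
    using that
  proof induction
    case (base x) then show ?case by (auto intro: acl.base)
  next
    case (step xs f)
    then have "xs \<in> tuples far f (sdom A)" using dom by (auto simp: tuples_def)
    then have "e (sfun A f xs) = sfun B f (map e xs)" using embeddingD(4)[OF e] by simp
    also have "\<dots> \<in> acl far B (e ` S)" by (rule acl.step) (use step in auto)
    finally show ?case .
  qed
  then show "e ` acl far A S \<subseteq> acl far B (e ` S)" by auto
  show "acl far B (e ` S) \<subseteq> e ` acl far A S"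
    by (intro acl_least closed_under_image[OF e closed_under_acl dom] image_mono acl_superset)
qed

lemma embedding_comp:
  assumes e: "embedding rar far e A B" and e': "embedding rar far e' B C"
  shows "embedding rar far (e' \<circ> e) A C"
  unfolding embedding_def
proof (intro conjI allI ballI)
  show "inj_on (e' \<circ> e) (sdom A)"
    using comp_inj_on[OF embeddingD(1)[OF e] inj_on_subset[OF embeddingD(1)[OF e'] embeddingD(2)[OF e]]] .
  have "e' ` e ` sdom A \<subseteq> sdom C"
    using image_mono[OF embeddingD(2)[OF e], of e'] embeddingD(2)[OF e'] by (rule order_trans)
  then show "(e' \<circ> e) ` sdom A \<subseteq> sdom C" by (simp add: image_comp)
next
  fix r xs assume xs: "xs \<in> tuples rar r (sdom A)"
  show "srel C r (map (e' \<circ> e) xs) = srel A r xs"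
    using embeddingD(3)[OF e xs] embeddingD(3)[OF e' map_in_tuples[OF xs embeddingD(2)[OF e]]]
    by simp
next
  fix f xs assume xs: "xs \<in> tuples far f (sdom A)"
  show "sfun C f (map (e' \<circ> e) xs) = (e' \<circ> e) (sfun A f xs)"
    using embeddingD(4)[OF e xs] embeddingD(4)[OF e' map_in_tuples[OF xs embeddingD(2)[OF e]]]
    by simp
qed

lemma siso_comp:
  assumes "siso rar far e A B" "siso rar far e' B C"
  shows "siso rar far (e' \<circ> e) A C"
proof -
  have "(e' \<circ> e) ` sdom A = sdom C"
    using siso_image[OF assms(1)] siso_image[OF assms(2)] by (simp only: image_comp[symmetric])
  then show ?thesis
    using assms embedding_comp[of rar far e A B e' C] unfolding siso_def by blast
qed

lemma siso_id: "siso rar far id A A"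
  unfolding siso_def embedding_def by (simp add: map_idI)

lemma embedding_cong:
  assumes e: "embedding rar far e A B" and st: "is_struct far A" and eq: "\<forall>x\<in>sdom A. e x = e' x"
  shows "embedding rar far e' A B"
  unfolding embedding_def
proof (intro conjI allI ballI)
  show "inj_on e' (sdom A)"
    using inj_on_cong[of "sdom A" e e'] eq embeddingD(1)[OF e] by blast
  have "e ` sdom A = e' ` sdom A"
    by (rule image_cong[OF refl]) (use eq in blast)
  then show "e' ` sdom A \<subseteq> sdom B" using embeddingD(2)[OF e] by simp
next
  fix r xs assume xs: "xs \<in> tuples rar r (sdom A)"
  show "srel B r (map e' xs) = srel A r xs"
    using embeddingD(3)[OF e xs] map_cong_tuples[OF xs eq] by simp
next
  fix f xs assume xs: "xs \<in> tuples far f (sdom A)"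
  then have "sfun A f xs \<in> sdom A" using st by (simp add: is_struct_def closed_under_def)
  then show "sfun B f (map e' xs) = e' (sfun A f xs)"
    using embeddingD(4)[OF e xs] map_cong_tuples[OF xs eq] eq by simp
qed

lemma siso_cong:
  assumes "siso rar far e A B" "is_struct far A" "\<forall>x\<in>sdom A. e x = e' x"
  shows "siso rar far e' A B"
proof -
  have "e ` sdom A = e' ` sdom A" by (rule image_cong[OF refl]) (use assms(3) in blast)
  then show ?thesis
    using assms embedding_cong[of rar far e A B e'] unfolding siso_def by simp
qed

lemma siso_inv_into:
  assumes s: "siso rar far e A B" and st: "is_struct far A"
  shows "siso rar far (inv_into (sdom A) e) B A"
proof -
  let ?i = "inv_into (sdom A) e"
  have inj: "inj_on e (sdom A)" and im: "e ` sdom A = sdom B"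
    using s by (auto simp: siso_def embedding_def)
  have inv_map: "map ?i (map e xs) = xs" if "set xs \<subseteq> sdom A" for xs
    using that inj by (auto intro!: map_idI)
  show ?thesis unfolding siso_def embedding_def
  proof (intro conjI allI ballI)
    show "inj_on ?i (sdom B)" "?i ` sdom B = sdom A"
      using inj_on_inv_into[of "sdom B" e "sdom A"] inv_into_image_cancel[OF inj order_refl] im
      by simp_all
    then show "?i ` sdom B \<subseteq> sdom A" by simp
  next
    fix r ys assume "ys \<in> tuples rar r (sdom B)"
    then obtain xs where xs: "xs \<in> tuples rar r (sdom A)" "ys = map e xs"
      using im tuples_image_map by metis
    then show "srel A r (map ?i ys) = srel B r ys"
      using embeddingD(3)[OF siso_embedding[OF s] xs(1)] inv_map[OF tuples_set_subset[OF xs(1)]] by simp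
  next
    fix f ys assume "ys \<in> tuples far f (sdom B)"
    then obtain xs where xs: "xs \<in> tuples far f (sdom A)" "ys = map e xs"
      using im tuples_image_map by metis
    then have "sfun A f xs \<in> sdom A" using st by (auto simp: is_struct_def closed_under_def)
    then show "sfun A f (map ?i ys) = ?i (sfun B f ys)"
      using xs embeddingD(4)[OF siso_embedding[OF s] xs(1)] inv_map[OF tuples_set_subset[OF xs(1)]] inj by simp
  qed
qed

lemma siso_restr_image:
  assumes "embedding rar far e A B" "T \<subseteq> sdom A"
  shows "siso rar far e (restr A T) (restr B (e ` T))"
  using assms unfolding siso_def embedding_def tuples_def
  by (auto intro: inj_on_subset)

lemma siso_conj_embedding:
  assumes e: "embedding rar far e D M" and D: "is_struct far D" "S1 \<subseteq> sdom D" "S2 \<subseteq> sdom D"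
    and \<Theta>: "siso rar far \<Theta> (restr D (acl far D S1)) (restr D (acl far D S2))"
  shows "siso rar far (e \<circ> \<Theta> \<circ> inv_into (acl far D S1) e)
           (restr M (acl far M (e ` S1))) (restr M (acl far M (e ` S2)))"
    and "x \<in> acl far D S1 \<Longrightarrow> (e \<circ> \<Theta> \<circ> inv_into (acl far D S1) e) (e x) = e (\<Theta> x)"
proof -
  have L: "acl far D S1 \<subseteq> sdom D" "acl far D S2 \<subseteq> sdom D"
    using acl_subset_sdom[OF D(1)] D(2,3) by blast+
  have e1: "siso rar far e (restr D (acl far D S1)) (restr M (acl far M (e ` S1)))"
    using siso_restr_image[OF e L(1)] embedding_image_acl[OF e D(1,2)] by simp
  have e2: "siso rar far e (restr D (acl far D S2)) (restr M (acl far M (e ` S2)))"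
    using siso_restr_image[OF e L(2)] embedding_image_acl[OF e D(1,3)] by simp
  have "siso rar far (inv_into (acl far D S1) e) (restr M (acl far M (e ` S1))) (restr D (acl far D S1))"
    using siso_inv_into[OF e1] closed_under_acl[of far D S1] by simp
  then show "siso rar far (e \<circ> \<Theta> \<circ> inv_into (acl far D S1) e)
           (restr M (acl far M (e ` S1))) (restr M (acl far M (e ` S2)))"
    using siso_comp[OF siso_comp[OF _ \<Theta>] e2] by (simp add: comp_assoc)
  show "(e \<circ> \<Theta> \<circ> inv_into (acl far D S1) e) (e x) = e (\<Theta> x)" if "x \<in> acl far D S1"
    using inv_into_f_f[OF inj_on_subset[OF embeddingD(1)[OF e] L(1)] that] by simp
qed

lemma embedding_induced_sub:
  assumes A: "induced_sub rar far A D" and e: "embedding rar far e D X"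
  shows "embedding rar far e A X"
  unfolding embedding_def
proof (intro conjI allI ballI)
  have s: "sdom A \<subseteq> sdom D" using A by (simp add: induced_sub_def)
  then show "inj_on e (sdom A)" "e ` sdom A \<subseteq> sdom X"
    using embeddingD(1,2)[OF e] inj_on_subset by blast+
  fix r xs assume xs: "xs \<in> tuples rar r (sdom A)"
  have xD: "xs \<in> tuples rar r (sdom D)" using tuples_mono[OF xs s] .
  have "srel A r xs = srel D r xs" using A xs by (simp add: induced_sub_def)
  then show "srel X r (map e xs) = srel A r xs"
    using embeddingD(3)[OF e xD] by simp
next
  have s: "sdom A \<subseteq> sdom D" using A by (simp add: induced_sub_def)
  fix f xs assume xs: "xs \<in> tuples far f (sdom A)"
  have xD: "xs \<in> tuples far f (sdom D)" using tuples_mono[OF xs s] .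
  have "sfun A f xs = sfun D f xs" using A xs by (simp add: induced_sub_def)
  then show "sfun X f (map e xs) = e (sfun A f xs)"
    using embeddingD(4)[OF e xD] by simp
qed

lemma closed_under_induced_sub:
  assumes "induced_sub rar far A D" shows "closed_under far D (sdom A)"
  using assms unfolding induced_sub_def is_struct_def closed_under_def by auto

lemma induced_sub_restr:
  assumes "closed_under far X K'" "K' \<subseteq> K"
  shows "induced_sub rar far (restr X K') (restr X K)"
  using assms unfolding induced_sub_def by simp

lemma amalg_pos_induced_sub:
  assumes AB: "amalg_pos rar far A B" and A': "induced_sub rar far A' A"
  shows "amalg_pos rar far A' B"
  unfolding amalg_pos_def
proof (intro conjI allI ballI)
  have s: "sdom A' \<inter> sdom B \<subseteq> sdom A \<inter> sdom B" "sdom A' \<inter> sdom B \<subseteq> sdom A'"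
    using A' by (auto simp: induced_sub_def)
  fix r xs assume xs: "xs \<in> tuples rar r (sdom A' \<inter> sdom B)"
  have "srel A' r xs = srel A r xs" using A' tuples_mono[OF xs s(2)] by (simp add: induced_sub_def)
  also have "\<dots> = srel B r xs" using AB tuples_mono[OF xs s(1)] by (simp add: amalg_pos_def)
  finally show "srel A' r xs = srel B r xs" .
next
  have s: "sdom A' \<inter> sdom B \<subseteq> sdom A \<inter> sdom B" "sdom A' \<inter> sdom B \<subseteq> sdom A'"
    using A' by (auto simp: induced_sub_def)
  fix f xs assume xs: "xs \<in> tuples far f (sdom A' \<inter> sdom B)"
  have "sfun A' f xs = sfun A f xs" using A' tuples_mono[OF xs s(2)] by (simp add: induced_sub_def)
  also have "\<dots> = sfun B f xs" using AB tuples_mono[OF xs s(1)] by (simp add: amalg_pos_def)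
  finally show "sfun A' f xs = sfun B f xs" .
qed

subsection \<open>Copies of structures\<close>

definition copy_struc :: "('a \<Rightarrow> 'b) \<Rightarrow> ('a,'r,'f) struc \<Rightarrow> ('b,'r,'f) struc" where
  "copy_struc e M = \<lparr>sdom = e ` sdom M, srel = (\<lambda>r xs. srel M r (map (inv_into UNIV e) xs)),
     sfun = (\<lambda>s xs. e (sfun M s (map (inv_into UNIV e) xs)))\<rparr>"

lemma copy_struc_simps [simp]:
  "sdom (copy_struc e M) = e ` sdom M"
  "srel (copy_struc e M) r xs = srel M r (map (inv_into UNIV e) xs)"
  "sfun (copy_struc e M) s xs = e (sfun M s (map (inv_into UNIV e) xs))"
  by (simp_all add: copy_struc_def)

lemma siso_copy_struc:
  assumes "inj e"
  shows "siso rar far e M (copy_struc e M)"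
  unfolding siso_def embedding_def using inj_on_subset[OF assms subset_UNIV] assms by simp

lemma is_struct_copy_struc:
  assumes "inj e" "is_struct far M"
  shows "is_struct far (copy_struc e M)"
  unfolding is_struct_def closed_under_def
proof (intro allI ballI)
  fix s xs assume "xs \<in> tuples far s (sdom (copy_struc e M))"
  then obtain ys where ys: "ys \<in> tuples far s (sdom M)" "xs = map e ys"
    by (auto elim: tuples_image_map)
  then have "sfun M s ys \<in> sdom M" using assms(2) by (simp add: is_struct_def closed_under_def)
  then show "sfun (copy_struc e M) s xs \<in> sdom (copy_struc e M)"
    using ys(2) assms(1) by simp
qed

lemma amalg_pos_restr_copy_struc:
  assumes e: "inj e" "\<forall>x\<in>A. e x = x" and A: "closed_under far M A"
    and overlap: "K \<inter> e ` K' \<subseteq> A"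
  shows "amalg_pos rar far (restr M K) (copy_struc e (restr M K'))"
proof -
  have inv_id: "\<forall>x\<in>A. inv_into UNIV e x = id x" using e by (metis id_apply inv_f_f)
  show ?thesis
    unfolding amalg_pos_def
  proof (intro conjI allI ballI)
    fix r xs assume "xs \<in> tuples rar r (sdom (restr M K) \<inter> sdom (copy_struc e (restr M K')))"
    then have xs: "xs \<in> tuples rar r A" using overlap tuples_mono by auto
    then show "srel (restr M K) r xs = srel (copy_struc e (restr M K')) r xs"
      using map_cong_tuples[OF xs inv_id] e by simp
  next
    fix s xs assume "xs \<in> tuples far s (sdom (restr M K) \<inter> sdom (copy_struc e (restr M K')))"
    then have xs: "xs \<in> tuples far s A" using overlap tuples_mono by auto
    then have "sfun M s xs \<in> A" using A by (simp add: closed_under_def)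
    then show "sfun (restr M K) s xs = sfun (copy_struc e (restr M K')) s xs"
      using map_cong_tuples[OF xs inv_id] e by simp
  qed
qed

lemma ex_inj_fixing_avoiding:
  fixes A K :: "nat set"
  assumes "finite K" "A \<subseteq> K"
  shows "\<exists>e. inj e \<and> (\<forall>x\<in>A. e x = x) \<and> range e \<inter> K \<subseteq> A"
proof -
  define m where "m = Suc (Max (insert 0 K))"
  have below: "x < m" if "x \<in> K" for x
    using that assms(1) by (simp add: m_def le_imp_less_Suc)
  define e where "e x = (if x \<in> A then x else x + m)" for x
  have "inj e"
    by (rule injI) (use below assms(2) in \<open>auto simp: e_def split: if_splits\<close>)
  moreover have "range e \<inter> K \<subseteq> A"
    using below by (auto simp: e_def split: if_splits)
  moreover have "\<forall>x\<in>A. e x = x" by (simp add: e_def)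
  ultimately show ?thesis by blast
qed

subsection \<open>Automorphism groups\<close>

lemma aut_group_carrier_iff:
  "g \<in> carrier (aut_group rar far X) \<longleftrightarrow> siso rar far g X X \<and> (\<forall>x. x \<notin> sdom X \<longrightarrow> g x = x)"
  by (simp add: aut_group_def)

lemma aut_group_mult [simp]: "mult (aut_group rar far X) g h = g \<circ> h"
  and aut_group_one [simp]: "one (aut_group rar far X) = id"
  by (simp_all add: aut_group_def)

lemma restrict_siso_in_aut_group:
  assumes "is_struct far X" "siso rar far \<psi> X X"
  shows "(\<lambda>x. if x \<in> sdom X then \<psi> x else x) \<in> carrier (aut_group rar far X)"
  unfolding aut_group_carrier_iff by (auto intro: siso_cong[OF assms(2,1)])

lemma siso_fixes_acl:
  assumes g: "siso rar far g X X" and st: "is_struct far X" and S: "S \<subseteq> sdom X"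
    and fix_S: "\<forall>x\<in>S. g x = x"
  shows "\<forall>x\<in>acl far X S. g x = x"
proof
  fix x assume "x \<in> acl far X S"
  then show "g x = x"
  proof induction
    case (step xs f)
    then have "xs \<in> tuples far f (sdom X)" "map g xs = xs"
      using acl_subset_sdom[OF st S] by (auto simp: tuples_def intro!: map_idI)
    then show ?case using embeddingD(4)[OF siso_embedding[OF g]] by metis
  qed (use fix_S in blast)
qed

lemma group_aut_group:
  assumes st: "is_struct far X"
  shows "group (aut_group rar far X)"
proof (rule groupI)
  fix g h assume "g \<in> carrier (aut_group rar far X)" "h \<in> carrier (aut_group rar far X)"
  then show "g \<otimes>\<^bsub>aut_group rar far X\<^esub> h \<in> carrier (aut_group rar far X)"
    using siso_comp[of rar far h X X g X] by (simp add: aut_group_carrier_iff)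
next
  show "\<one>\<^bsub>aut_group rar far X\<^esub> \<in> carrier (aut_group rar far X)"
    by (simp add: aut_group_carrier_iff siso_id)
next
  fix g assume "g \<in> carrier (aut_group rar far X)"
  then have gs: "siso rar far g X X" and g_out: "\<forall>x. x \<notin> sdom X \<longrightarrow> g x = x"
    by (auto simp: aut_group_carrier_iff)
  let ?h = "\<lambda>x. if x \<in> sdom X then inv_into (sdom X) g x else x"
  have "?h \<in> carrier (aut_group rar far X)"
    by (rule restrict_siso_in_aut_group[OF st siso_inv_into[OF gs st]])
  moreover have "?h (g x) = x" for x
  proof (cases "x \<in> sdom X")
    case True
    then have "g x \<in> sdom X" using siso_image[OF gs] by blast
    with True show ?thesis using embeddingD(1)[OF siso_embedding[OF gs]] by simp
  next
    case False
    then show ?thesis using g_out by simp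
  qed
  then have "?h \<circ> g = id" by auto
  ultimately show "\<exists>h\<in>carrier (aut_group rar far X). h \<otimes>\<^bsub>aut_group rar far X\<^esub> g = \<one>\<^bsub>aut_group rar far X\<^esub>"
    by auto
qed (simp_all add: comp_assoc)

lemma dynamical_ideal_finite_subsets:
  assumes st: "is_struct far X"
  shows "dynamical_ideal (aut_group rar far X) (sdom X) (\<lambda>g x. g x) {a. finite a \<and> a \<subseteq> sdom X}"
proof -
  have bij: "bij_betw g (sdom X) (sdom X)" if "g \<in> carrier (aut_group rar far X)" for g
  proof -
    have gs: "siso rar far g X X" using that by (simp add: aut_group_carrier_iff)
    show ?thesis
      using embeddingD(1)[OF siso_embedding[OF gs]] siso_image[OF gs] by (simp add: bij_betw_def)
  qed
  have "group_act (aut_group rar far X) (sdom X) (\<lambda>g x. g x)"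
    unfolding group_act_def using group_aut_group[OF st] bij by simp
  moreover have "g ` a \<subseteq> sdom X" if "g \<in> carrier (aut_group rar far X)" "a \<subseteq> sdom X" for g a
    using bij[OF that(1)] that(2) by (auto simp: bij_betw_def)
  ultimately show ?thesis
    unfolding dynamical_ideal_def ideal_on_def by (auto intro: finite_subset)
qed

subsection \<open>A criterion for simplicity\<close>

lemma (in normal) mem_if_conjugate_mem:
  assumes "g \<in> carrier G" "h \<in> carrier G" "k \<in> carrier G"
    and "inv k \<otimes> h \<otimes> k \<in> H" "inv g \<otimes> h \<in> H"
  shows "g \<in> H"
proof -
  have "h = k \<otimes> (inv k \<otimes> h \<otimes> k) \<otimes> inv k"
    using assms(2,3) by (simp add: m_assoc) (simp add: m_assoc [symmetric])
  then have "h \<in> H" using inv_op_closed2 assms(3,4) by metis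
  moreover have "g = h \<otimes> inv (inv g \<otimes> h)"
    using assms(1,2) by (simp add: inv_mult_group m_assoc) (simp add: m_assoc [symmetric])
  ultimately show ?thesis
    using assms(5) subgroup.m_closed[OF subgroup_axioms] subgroup.m_inv_closed[OF subgroup_axioms]
    by metis
qed

lemma pstab_mem_by_group_of_pstab:
  assumes act: "group_act G X act" and grp: "group (G\<lparr>carrier := P\<rparr>)" and P: "P \<subseteq> carrier G"
    and bX: "b \<subseteq> X" and u: "u \<in> P" and v: "v \<in> P"
  defines "H \<equiv> G\<lparr>carrier := P\<rparr>"
  shows "\<forall>x\<in>b. act v (act u x) = act u x \<Longrightarrow> inv\<^bsub>H\<^esub> u \<otimes>\<^bsub>H\<^esub> v \<otimes>\<^bsub>H\<^esub> u \<in> pstab G act b"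
    and "\<forall>x\<in>b. act v x = act u x \<Longrightarrow> inv\<^bsub>H\<^esub> u \<otimes>\<^bsub>H\<^esub> v \<in> pstab G act b"
proof -
  interpret H: group H using grp by (simp add: H_def)
  have uH: "u \<in> carrier H" and vH: "v \<in> carrier H" using u v by (simp_all add: H_def)
  have sub: "carrier H \<subseteq> carrier G" using P by (simp add: H_def)
  have act_mult: "act (w \<otimes>\<^bsub>H\<^esub> w') x = act w (act w' x)" if "w \<in> carrier H" "w' \<in> carrier H" "x \<in> X"
    for w w' x
  proof -
    have "w \<in> carrier G" "w' \<in> carrier G" using that sub by blast+
    with that(3) act show ?thesis by (simp add: group_act_def H_def)
  qed
  have act_inv: "act (inv\<^bsub>H\<^esub> w) (act w x) = x" if "w \<in> carrier H" "x \<in> X" for w x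
  proof -
    have "act (inv\<^bsub>H\<^esub> w) (act w x) = act (inv\<^bsub>H\<^esub> w \<otimes>\<^bsub>H\<^esub> w) x"
      using act_mult[OF H.inv_closed[OF that(1)] that] by simp
    also have "\<dots> = act \<one>\<^bsub>H\<^esub> x" using that(1) by (simp only: H.l_inv)
    also have "\<dots> = x" using act that(2) by (simp add: group_act_def H_def)
    finally show ?thesis .
  qed
  have pstabI: "w \<in> pstab G act b" if "w \<in> carrier H" "\<And>x. x \<in> b \<Longrightarrow> act w x = x" for w
    using that sub by (auto simp: pstab_def)
  show "inv\<^bsub>H\<^esub> u \<otimes>\<^bsub>H\<^esub> v \<otimes>\<^bsub>H\<^esub> u \<in> pstab G act b" if fix_ub: "\<forall>x\<in>b. act v (act u x) = act u x"
  proof (rule pstabI)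
    show "inv\<^bsub>H\<^esub> u \<otimes>\<^bsub>H\<^esub> v \<otimes>\<^bsub>H\<^esub> u \<in> carrier H" using uH vH by simp
    fix x assume x: "x \<in> b"
    have "u \<in> carrier G" "x \<in> X" using uH sub bX x by blast+
    then have ux: "act u x \<in> X" using act by (auto simp: group_act_def bij_betw_def)
    have "act (inv\<^bsub>H\<^esub> u \<otimes>\<^bsub>H\<^esub> v \<otimes>\<^bsub>H\<^esub> u) x = act (inv\<^bsub>H\<^esub> u) (act v (act u x))"
      using act_mult[OF H.m_closed[OF H.inv_closed[OF uH] vH] uH] act_mult[OF H.inv_closed[OF uH] vH ux]
        bX x by auto
    then show "act (inv\<^bsub>H\<^esub> u \<otimes>\<^bsub>H\<^esub> v \<otimes>\<^bsub>H\<^esub> u) x = x"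
      using fix_ub act_inv[OF uH] bX x by auto
  qed
  show "inv\<^bsub>H\<^esub> u \<otimes>\<^bsub>H\<^esub> v \<in> pstab G act b" if agree: "\<forall>x\<in>b. act v x = act u x"
  proof (rule pstabI)
    show "inv\<^bsub>H\<^esub> u \<otimes>\<^bsub>H\<^esub> v \<in> carrier H" using uH vH by simp
    fix x assume x: "x \<in> b"
    then show "act (inv\<^bsub>H\<^esub> u \<otimes>\<^bsub>H\<^esub> v) x = x"
      using act_mult[OF H.inv_closed[OF uH] vH] act_inv[OF uH] agree bX by auto
  qed
qed

lemma simple_dynamical_idealI:
  assumes dyn: "dynamical_ideal G X act I"
    and shift: "\<And>a b g. a \<in> I \<Longrightarrow> b \<in> I \<Longrightarrow> a \<subseteq> b \<Longrightarrow> g \<in> pstab G act a \<Longrightarrow>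
      \<exists>h\<in>pstab G act a. \<exists>k\<in>pstab G act a.
        (\<forall>x\<in>b. act h x = act g x) \<and> (\<forall>x\<in>b. act h (act k x) = act k x)"
  shows "simple_dynamical_ideal G X act I"
  unfolding simple_dynamical_ideal_def
proof (intro conjI ballI allI impI dyn)
  fix a b N
  assume ab: "a \<in> I" "b \<in> I" "a \<subseteq> b"
    and N: "N \<lhd> G\<lparr>carrier := pstab G act a\<rparr> \<and> pstab G act b \<subseteq> N"
  let ?H = "G\<lparr>carrier := pstab G act a\<rparr>"
  have normal: "N \<lhd> ?H" and b_in_N: "pstab G act b \<subseteq> N" using N by blast+
  have act: "group_act G X act" and bX: "b \<subseteq> X"
    using dyn ab(2) by (auto simp: dynamical_ideal_def ideal_on_def)
  have grp: "group ?H" and sub: "pstab G act a \<subseteq> carrier G"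
    using normal by (auto simp: normal_def pstab_def)
  show "N = pstab G act a"
  proof
    show "N \<subseteq> pstab G act a" using subgroup.subset[OF normal_imp_subgroup[OF normal]] by simp
  next
    show "pstab G act a \<subseteq> N"
    proof
      fix g assume g: "g \<in> pstab G act a"
      then obtain h k where hk: "h \<in> pstab G act a" "k \<in> pstab G act a"
        "\<forall>x\<in>b. act h x = act g x" "\<forall>x\<in>b. act h (act k x) = act k x"
        using shift[OF ab] by blast
      show "g \<in> N"
        using normal.mem_if_conjugate_mem[OF normal _ _ _
            subsetD[OF b_in_N pstab_mem_by_group_of_pstab(1)[OF act grp sub bX hk(2,1,4)]]
            subsetD[OF b_in_N pstab_mem_by_group_of_pstab(2)[OF act grp sub bX g hk(1,3)]]]
          g hk(1,2) by simp
    qed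
  qed
qed

subsection \<open>Canonical amalgamation\<close>

locale canonical_fraisse_class =
  fixes rar :: "'r \<Rightarrow> nat" and far :: "'f \<Rightarrow> nat" and F :: "(nat, 'r, 'f) struc set"
    and C :: "(nat, 'r, 'f) struc \<Rightarrow> (nat, 'r, 'f) struc \<Rightarrow> (nat, 'r, 'f) struc"
  assumes fraisse_class: "fraisse_class rar far F"
    and minimal: "A \<in> F \<Longrightarrow> B \<in> F \<Longrightarrow> amalg_pos rar far A B \<Longrightarrow>
      minimal_amalgamation rar far F A B (C A B)"
    and invariant: "A \<in> F \<Longrightarrow> B \<in> F \<Longrightarrow> A' \<in> F \<Longrightarrow> B' \<in> F \<Longrightarrow>
      amalg_pos rar far A B \<Longrightarrow> amalg_pos rar far A' B' \<Longrightarrow>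
      siso rar far \<phi> A A' \<Longrightarrow> siso rar far \<psi> B B' \<Longrightarrow>
      \<forall>x \<in> sdom A \<inter> sdom B. \<phi> x = \<psi> x \<Longrightarrow> \<phi> ` (sdom A \<inter> sdom B) = sdom A' \<inter> sdom B' \<Longrightarrow>
      \<exists>\<theta>. siso rar far \<theta> (C A B) (C A' B') \<and> (\<forall>x\<in>sdom A. \<theta> x = \<phi> x) \<and> (\<forall>x\<in>sdom B. \<theta> x = \<psi> x)"
    and hereditary: "A \<in> F \<Longrightarrow> B \<in> F \<Longrightarrow> A' \<in> F \<Longrightarrow>
      amalg_pos rar far A B \<Longrightarrow> induced_sub rar far A' A \<Longrightarrow> sdom A \<inter> sdom B \<subseteq> sdom A' \<Longrightarrow>
      \<exists>\<theta>. siso rar far \<theta> (C A' B) (restr (C A B) (acl far (C A B) (sdom A' \<union> sdom B))) \<and>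
        (\<forall>x \<in> sdom A' \<union> sdom B. \<theta> x = x)"

lemma ex_canonical_fraisse_class:
  assumes "fraisse_class rar far F" "hereditary_canonical_amalgamation rar far F"
  shows "\<exists>C. canonical_fraisse_class rar far F C"
proof -
  from assms(2) obtain C where
    "\<forall>A\<in>F. \<forall>B\<in>F. amalg_pos rar far A B \<longrightarrow> minimal_amalgamation rar far F A B (C A B)"
    and "\<forall>A\<in>F. \<forall>B\<in>F. \<forall>A'\<in>F. \<forall>B'\<in>F. \<forall>\<phi> \<psi>.
      amalg_pos rar far A B \<and> amalg_pos rar far A' B' \<and> siso rar far \<phi> A A' \<and> siso rar far \<psi> B B' \<and>
      (\<forall>x \<in> sdom A \<inter> sdom B. \<phi> x = \<psi> x) \<and> \<phi> ` (sdom A \<inter> sdom B) = sdom A' \<inter> sdom B' \<longrightarrow>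
      (\<exists>\<theta>. siso rar far \<theta> (C A B) (C A' B') \<and> (\<forall>x\<in>sdom A. \<theta> x = \<phi> x) \<and> (\<forall>x\<in>sdom B. \<theta> x = \<psi> x))"
    and "\<forall>A\<in>F. \<forall>B\<in>F. \<forall>A'\<in>F.
      amalg_pos rar far A B \<and> induced_sub rar far A' A \<and> sdom A \<inter> sdom B \<subseteq> sdom A' \<longrightarrow>
      (\<exists>\<theta>. siso rar far \<theta> (C A' B) (restr (C A B) (acl far (C A B) (sdom A' \<union> sdom B))) \<and>
        (\<forall>x \<in> sdom A' \<union> sdom B. \<theta> x = x))"
    unfolding hereditary_canonical_amalgamation_def by blast
  with assms(1) have "canonical_fraisse_class rar far F C"
    by unfold_locales blast+
  then show ?thesis by blast
qed

context canonical_fraisse_class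
begin

lemma struct_of_class: "A \<in> F \<Longrightarrow> is_struct far A"
  and finite_of_class: "A \<in> F \<Longrightarrow> finite (sdom A)"
  and class_siso_closed: "A \<in> F \<Longrightarrow> is_struct far B \<Longrightarrow> siso rar far e A B \<Longrightarrow> B \<in> F"
  using fraisse_class unfolding fraisse_class_def by blast+

lemma canonical_amalgamD:
  assumes "A \<in> F" "B \<in> F" "amalg_pos rar far A B"
  shows "C A B \<in> F" "sdom A \<union> sdom B \<subseteq> sdom (C A B)"
    "induced_sub rar far A (C A B)" "induced_sub rar far B (C A B)"
  using minimal[OF assms] unfolding minimal_amalgamation_def is_amalgamation_def by blast+

text \<open>Heredity embeds \<open>C A\<^sub>i B\<close> into \<open>C A B\<close> over \<open>A\<^sub>i \<union> B\<close>, and invariance identifies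
  \<open>C A\<^sub>1 B\<close> with \<open>C A\<^sub>2 B\<close> along \<open>\<phi> \<union> id\<close>.\<close>
lemma siso_amalgam_substructures:
  assumes A: "A \<in> F" and B: "B \<in> F" and AB: "amalg_pos rar far A B"
    and A1: "A1 \<in> F" "induced_sub rar far A1 A" and A2: "A2 \<in> F" "induced_sub rar far A2 A"
    and overlap: "sdom A \<inter> sdom B \<subseteq> sdom A1 \<inter> sdom A2"
    and \<phi>: "siso rar far \<phi> A1 A2" "\<forall>x\<in>sdom A \<inter> sdom B. \<phi> x = x"
  shows "\<exists>\<Theta>. siso rar far \<Theta> (restr (C A B) (acl far (C A B) (sdom A1 \<union> sdom B)))
                              (restr (C A B) (acl far (C A B) (sdom A2 \<union> sdom B))) \<and>
             (\<forall>x\<in>sdom A1. \<Theta> x = \<phi> x) \<and> (\<forall>x\<in>sdom B. \<Theta> x = x)"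
proof -
  have A1B: "amalg_pos rar far A1 B" and A2B: "amalg_pos rar far A2 B"
    using amalg_pos_induced_sub AB A1(2) A2(2) by blast+
  have inter: "sdom A1 \<inter> sdom B = sdom A \<inter> sdom B" "sdom A2 \<inter> sdom B = sdom A \<inter> sdom B"
    using A1(2) A2(2) overlap by (auto simp: induced_sub_def)
  obtain \<theta>1 where \<theta>1: "siso rar far \<theta>1 (C A1 B) (restr (C A B) (acl far (C A B) (sdom A1 \<union> sdom B)))"
      "\<forall>x \<in> sdom A1 \<union> sdom B. \<theta>1 x = x"
    using hereditary[OF A B A1(1) AB A1(2)] overlap by blast
  obtain \<theta>2 where \<theta>2: "siso rar far \<theta>2 (C A2 B) (restr (C A B) (acl far (C A B) (sdom A2 \<union> sdom B)))"
      "\<forall>x \<in> sdom A2 \<union> sdom B. \<theta>2 x = x"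
    using hereditary[OF A B A2(1) AB A2(2)] overlap by blast
  have "\<forall>x \<in> sdom A1 \<inter> sdom B. \<phi> x = id x" using \<phi>(2) inter(1) by simp
  moreover have "\<phi> ` (sdom A1 \<inter> sdom B) = sdom A2 \<inter> sdom B"
    using \<phi>(2) inter by (simp add: image_cong[OF refl, of _ \<phi> id])
  ultimately obtain \<theta> where \<theta>: "siso rar far \<theta> (C A1 B) (C A2 B)"
      "\<forall>x\<in>sdom A1. \<theta> x = \<phi> x" "\<forall>x\<in>sdom B. \<theta> x = x"
    using invariant[OF A1(1) B A2(1) B A1B A2B \<phi>(1) siso_id] by auto
  define \<Theta> where "\<Theta> = \<theta>2 \<circ> (\<theta> \<circ> inv_into (sdom (C A1 B)) \<theta>1)"
  have C1: "is_struct far (C A1 B)" "sdom A1 \<union> sdom B \<subseteq> sdom (C A1 B)"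
    using canonical_amalgamD[OF A1(1) B A1B] struct_of_class by blast+
  have \<theta>1_inv: "inv_into (sdom (C A1 B)) \<theta>1 x = x" if "x \<in> sdom A1 \<union> sdom B" for x
    using inv_into_f_f[OF embeddingD(1)[OF siso_embedding[OF \<theta>1(1)]], of x] \<theta>1(2) that C1(2) by auto
  have "siso rar far \<Theta> (restr (C A B) (acl far (C A B) (sdom A1 \<union> sdom B)))
                          (restr (C A B) (acl far (C A B) (sdom A2 \<union> sdom B)))"
    unfolding \<Theta>_def using siso_comp[OF siso_comp[OF siso_inv_into[OF \<theta>1(1) C1(1)] \<theta>(1)] \<theta>2(1)] .
  moreover have "\<Theta> x = \<phi> x" if "x \<in> sdom A1" for x
  proof -
    have "\<phi> x \<in> sdom A2" using that siso_image[OF \<phi>(1)] by blast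
    then show ?thesis using that \<theta>1_inv \<theta>(2) \<theta>2(2) by (simp add: \<Theta>_def)
  qed
  moreover have "\<Theta> x = x" if "x \<in> sdom B" for x
    using that \<theta>1_inv \<theta>(3) \<theta>2(2) by (simp add: \<Theta>_def)
  ultimately show ?thesis by blast
qed

end

subsection \<open>The Fraisse limit\<close>

locale canonical_fraisse_limit = canonical_fraisse_class +
  fixes X :: "(nat, 'r, 'f) struc"
  assumes fraisse_limit: "fraisse_limit rar far F X"
begin

lemma struct_limit: "is_struct far X"
  using fraisse_limit by (simp add: fraisse_limit_def)

lemma restr_limit_in_class:
  assumes "finite K" "K \<subseteq> sdom X" "closed_under far X K"
  shows "restr X K \<in> F"
proof -
  have "restr X (acl far X K) \<in> F" using fraisse_limit assms(1,2) by (simp add: fraisse_limit_def)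
  then show ?thesis by (simp add: acl_eq_if_closed[OF assms(3)])
qed

lemma finite_acl_limit:
  assumes "finite S" "S \<subseteq> sdom X"
  shows "finite (acl far X S)"
  using fraisse_limit assms finite_of_class unfolding fraisse_limit_def by (metis sdom_restr)

lemma aut_extending_siso:
  assumes "finite S" "finite T" "S \<subseteq> sdom X" "T \<subseteq> sdom X"
    and "siso rar far \<phi> (restr X (acl far X S)) (restr X (acl far X T))"
  shows "\<exists>\<psi>\<in>carrier (aut_group rar far X). \<forall>x\<in>acl far X S. \<psi> x = \<phi> x"
proof -
  have "ultrahomogeneous rar far X" using fraisse_limit by (simp add: fraisse_limit_def)
  then obtain \<psi> where \<psi>: "siso rar far \<psi> X X" "\<forall>x\<in>acl far X S. \<psi> x = \<phi> x"
    using assms unfolding ultrahomogeneous_def by (elim allE[of _ S] allE[of _ T] allE[of _ \<phi>]) auto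
  have S_X: "acl far X S \<subseteq> sdom X" using acl_subset_sdom[OF struct_limit assms(3)] .
  show ?thesis
  proof (rule bexI)
    show "\<forall>x\<in>acl far X S. (if x \<in> sdom X then \<psi> x else x) = \<phi> x" using \<psi>(2) S_X by auto
  qed (rule restrict_siso_in_aut_group[OF struct_limit \<psi>(1)])
qed

lemma embedding_fixing:
  assumes D: "D \<in> F" and K: "finite K" "K \<subseteq> sdom X" and KD: "induced_sub rar far (restr X K) D"
  shows "\<exists>e. embedding rar far e D X \<and> (\<forall>x\<in>K. e x = x)"
proof -
  obtain e0 where e0: "embedding rar far e0 D X"
    using fraisse_limit D unfolding fraisse_limit_def by blast
  have K_closed: "closed_under far X K" and K_sub: "K \<subseteq> sdom D"
    using KD by (auto simp: induced_sub_def)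
  have e0K: "embedding rar far e0 (restr X K) X" using embedding_induced_sub[OF KD e0] .
  then have "siso rar far e0 (restr X K) (restr X (e0 ` K))"
    using siso_restr_image[of rar far e0 "restr X K" X K] by simp
  moreover have "closed_under far X (e0 ` K)"
    using closed_under_image[OF e0K] K_closed by simp
  ultimately have e0_siso: "siso rar far e0 (restr X (acl far X K)) (restr X (acl far X (e0 ` K)))"
    using K_closed by (simp add: acl_eq_if_closed)
  have "e0 ` K \<subseteq> sdom X" using embeddingD(2)[OF e0] K_sub by blast
  then obtain \<psi> where \<psi>: "\<psi> \<in> carrier (aut_group rar far X)" "\<forall>x\<in>acl far X K. \<psi> x = e0 x"
    using aut_extending_siso[OF K(1) finite_imageI[OF K(1)] K(2) _ e0_siso] by blast
  have \<psi>_K: "\<psi> x = e0 x" if "x \<in> K" for x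
    using \<psi>(2) that acl_eq_if_closed[OF K_closed] by simp
  let ?G = "aut_group rar far X"
  interpret G: group ?G using group_aut_group[OF struct_limit] .
  have "siso rar far (inv\<^bsub>?G\<^esub> \<psi>) X X"
    using G.inv_closed[OF \<psi>(1)] by (simp add: aut_group_carrier_iff)
  then have "embedding rar far (inv\<^bsub>?G\<^esub> \<psi> \<circ> e0) D X"
    using embedding_comp[OF e0 siso_embedding] by blast
  moreover have "(inv\<^bsub>?G\<^esub> \<psi> \<circ> e0) x = x" if "x \<in> K" for x
    using fun_cong[OF G.l_inv[OF \<psi>(1)], of x] \<psi>_K[OF that] by simp
  ultimately show ?thesis by blast
qed

lemma aut_agreeing_fixing_amalgam:
  assumes K0: "finite K0" "K0 \<subseteq> sdom X" "closed_under far X K0"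
    and K1: "closed_under far X K1" "K1 \<subseteq> K0" and K2: "closed_under far X K2" "K2 \<subseteq> K0"
    and B: "B \<in> F" "amalg_pos rar far (restr X K0) B" "K0 \<inter> sdom B \<subseteq> K1 \<inter> K2"
    and g: "siso rar far g (restr X K1) (restr X K2)" "\<forall>x\<in>K0 \<inter> sdom B. g x = x"
    and e: "embedding rar far e (C (restr X K0) B) X" "\<forall>x\<in>K0. e x = x"
  shows "\<exists>h\<in>carrier (aut_group rar far X). (\<forall>x\<in>K1. h x = g x) \<and> (\<forall>x\<in>sdom B. h (e x) = e x)"
proof -
  let ?D = "C (restr X K0) B"
  have A0: "restr X K0 \<in> F" using restr_limit_in_class[OF K0] .
  have fin: "finite K1" "finite K2" "finite (sdom B)"
    using K1(2) K2(2) K0(1) finite_subset finite_of_class[OF B(1)] by blast+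
  have A1: "restr X K1 \<in> F" and A2: "restr X K2 \<in> F"
    using restr_limit_in_class fin K0(2) K1 K2 by blast+
  obtain \<Theta> where \<Theta>: "siso rar far \<Theta> (restr ?D (acl far ?D (K1 \<union> sdom B)))
                                   (restr ?D (acl far ?D (K2 \<union> sdom B)))"
      "\<forall>x\<in>K1. \<Theta> x = g x" "\<forall>x\<in>sdom B. \<Theta> x = x"
    using siso_amalgam_substructures[OF A0 B(1,2) A1 induced_sub_restr[OF K1] A2
        induced_sub_restr[OF K2] _ g(1)] B(3) g(2) by auto
  have D: "is_struct far ?D" "K0 \<union> sdom B \<subseteq> sdom ?D"
    using canonical_amalgamD[OF A0 B(1,2)] struct_of_class by auto
  have e_K: "e ` (K \<union> sdom B) = K \<union> e ` sdom B" if "K \<subseteq> K0" for K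
  proof -
    have "e ` K = id ` K" by (rule image_cong[OF refl]) (use e(2) that in auto)
    then show ?thesis by (simp add: image_Un)
  qed
  have S: "K1 \<union> sdom B \<subseteq> sdom ?D" "K2 \<union> sdom B \<subseteq> sdom ?D" using D(2) K1(2) K2(2) by auto
  define \<Phi> where "\<Phi> = e \<circ> \<Theta> \<circ> inv_into (acl far ?D (K1 \<union> sdom B)) e"
  have \<Phi>: "siso rar far \<Phi> (restr X (acl far X (K1 \<union> e ` sdom B))) (restr X (acl far X (K2 \<union> e ` sdom B)))"
    using siso_conj_embedding(1)[OF e(1) D(1) S \<Theta>(1)] e_K[OF K1(2)] e_K[OF K2(2)]
    unfolding \<Phi>_def by simp
  have "e ` sdom B \<subseteq> sdom X" using embeddingD(2)[OF e(1)] D(2) by blast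
  then have "K1 \<union> e ` sdom B \<subseteq> sdom X" "K2 \<union> e ` sdom B \<subseteq> sdom X"
    using K0(2) K1(2) K2(2) by auto
  moreover have "finite (K1 \<union> e ` sdom B)" "finite (K2 \<union> e ` sdom B)" using fin by simp_all
  ultimately obtain h where h: "h \<in> carrier (aut_group rar far X)"
      "\<forall>x\<in>acl far X (K1 \<union> e ` sdom B). h x = \<Phi> x"
    using aut_extending_siso[OF _ _ _ _ \<Phi>] by blast
  have \<Phi>_e: "\<Phi> (e x) = e (\<Theta> x)" if "x \<in> K1 \<union> sdom B" for x
    using siso_conj_embedding(2)[OF e(1) D(1) S \<Theta>(1) subsetD[OF acl_superset that]]
    unfolding \<Phi>_def .
  have "h x = g x" if "x \<in> K1" for x
  proof -
    have "g x \<in> K2" using siso_image[OF g(1)] that by auto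
    then have "e (g x) = g x" using e(2) K2(2) by blast
    moreover have "e x = x" using e(2) K1(2) that by blast
    ultimately show ?thesis
      using h(2) \<Phi>_e[of x] \<Theta>(2) that acl_superset[of "K1 \<union> e ` sdom B" far X] by auto
  qed
  moreover have "h (e x) = e x" if "x \<in> sdom B" for x
    using h(2) \<Phi>_e[of x] \<Theta>(3) that acl_superset[of "K1 \<union> e ` sdom B" far X] by auto
  ultimately show ?thesis using h(1) by blast
qed

lemma ex_copy_over:
  assumes K0: "finite K0" "K0 \<subseteq> sdom X" and K1: "closed_under far X K1" "K1 \<subseteq> K0"
    and A: "closed_under far X A" "A \<subseteq> K1"
  obtains f B where "B \<in> F" "siso rar far f (restr X K1) B" "\<forall>x\<in>A. f x = x"
    "K0 \<inter> sdom B \<subseteq> A" "amalg_pos rar far (restr X K0) B"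
proof -
  obtain f :: "nat \<Rightarrow> nat" where f: "inj f" "\<forall>x\<in>A. f x = x" "range f \<inter> K0 \<subseteq> A"
    using ex_inj_fixing_avoiding[OF K0(1)] A(2) K1(2) by (meson order_trans)
  let ?B = "copy_struc f (restr X K1)"
  have iso: "siso rar far f (restr X K1) ?B" by (rule siso_copy_struc[OF f(1)])
  have "restr X K1 \<in> F"
    using restr_limit_in_class[OF finite_subset[OF K1(2) K0(1)] _ K1(1)] K1(2) K0(2) by blast
  moreover have "is_struct far ?B" using is_struct_copy_struc[OF f(1), of far "restr X K1"] K1(1) by simp
  ultimately have "?B \<in> F" using class_siso_closed iso by blast
  moreover have "K0 \<inter> sdom ?B \<subseteq> A" using f(3) by auto
  moreover have "amalg_pos rar far (restr X K0) ?B"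
    using amalg_pos_restr_copy_struc[OF f(1,2) A(1)] f(3) by blast
  ultimately show thesis using that iso f(2) by blast
qed

lemma aut_extending_embedded_copy:
  assumes K: "finite K" "K \<subseteq> sdom X" "closed_under far X K" and f: "siso rar far f (restr X K) B"
    and B: "induced_sub rar far B D" and e: "embedding rar far e D X"
  shows "\<exists>k\<in>carrier (aut_group rar far X). \<forall>x\<in>K. k x = e (f x)"
proof -
  have "siso rar far e B (restr X (e ` sdom B))"
    using siso_restr_image[OF embedding_induced_sub[OF B e] order_refl] by simp
  moreover have "acl far X (e ` sdom B) = e ` sdom B"
    using acl_eq_if_closed closed_under_image[OF e closed_under_induced_sub[OF B]] B
    by (simp add: induced_sub_def)
  ultimately have "siso rar far (e \<circ> f) (restr X (acl far X K)) (restr X (acl far X (e ` sdom B)))"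
    using siso_comp[OF f] acl_eq_if_closed[OF K(3)] by simp
  moreover have "e ` sdom B \<subseteq> sdom X" using embeddingD(2)[OF e] B by (auto simp: induced_sub_def)
  moreover have "finite (e ` sdom B)" using K(1) siso_image[OF f] by (metis finite_imageI sdom_restr)
  ultimately show ?thesis
    using aut_extending_siso[OF K(1) _ K(2)] acl_eq_if_closed[OF K(3)] by fastforce
qed

lemma aut_pair_over_copy:
  assumes K0: "finite K0" "K0 \<subseteq> sdom X" "closed_under far X K0"
    and K1: "closed_under far X K1" "K1 \<subseteq> K0" "closed_under far X (g ` K1)" "g ` K1 \<subseteq> K0"
    and A: "closed_under far X A" "A \<subseteq> K1" "A \<subseteq> g ` K1"
    and g: "siso rar far g X X" "\<forall>x\<in>A. g x = x"
  shows "\<exists>h\<in>carrier (aut_group rar far X). \<exists>k\<in>carrier (aut_group rar far X).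
           (\<forall>x\<in>K1. h x = g x) \<and> (\<forall>x\<in>A. k x = x) \<and> (\<forall>x\<in>K1. h (k x) = k x)"
proof -
  obtain f B where B: "B \<in> F" "siso rar far f (restr X K1) B" "\<forall>x\<in>A. f x = x"
      "K0 \<inter> sdom B \<subseteq> A" "amalg_pos rar far (restr X K0) B"
    by (rule ex_copy_over[OF K0(1,2) K1(1,2) A(1,2)])
  let ?D = "C (restr X K0) B"
  have D: "?D \<in> F" "induced_sub rar far (restr X K0) ?D" "induced_sub rar far B ?D"
    using canonical_amalgamD[OF restr_limit_in_class[OF K0] B(1,5)] by blast+
  obtain e where e: "embedding rar far e ?D X" "\<forall>x\<in>K0. e x = x"
    using embedding_fixing[OF D(1) K0(1,2) D(2)] by blast
  have "siso rar far g (restr X K1) (restr X (g ` K1))"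
    using siso_restr_image[OF siso_embedding[OF g(1)]] K1(2) K0(2) by auto
  then obtain h where h: "h \<in> carrier (aut_group rar far X)" "\<forall>x\<in>K1. h x = g x"
      "\<forall>x\<in>sdom B. h (e x) = e x"
    using aut_agreeing_fixing_amalgam[OF K0 K1 B(1,5) _ _ _ e] B(4) A(2,3) g(2) by blast
  have "finite K1" using finite_subset[OF K1(2) K0(1)] .
  then obtain k where k: "k \<in> carrier (aut_group rar far X)" "\<forall>x\<in>K1. k x = e (f x)"
    using aut_extending_embedded_copy[OF _ _ K1(1) B(2) D(3) e(1)] K1(2) K0(2) by blast
  have "k x = x" if "x \<in> A" for x
    using k(2) B(3) e(2) A(2) K1(2) that by (simp add: subset_iff)
  moreover have "h (k x) = k x" if "x \<in> K1" for x
  proof -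
    have "f x \<in> sdom B" using siso_image[OF B(2)] that by auto
    then show ?thesis using k(2) h(3) that by simp
  qed
  ultimately show ?thesis using h(1,2) k(1) by blast
qed

lemma pstab_shift:
  assumes b: "finite b" "b \<subseteq> sdom X" and ab: "a \<subseteq> b"
    and g: "g \<in> pstab (aut_group rar far X) (\<lambda>g x. g x) a"
  shows "\<exists>h\<in>pstab (aut_group rar far X) (\<lambda>g x. g x) a. \<exists>k\<in>pstab (aut_group rar far X) (\<lambda>g x. g x) a.
           (\<forall>x\<in>b. h x = g x) \<and> (\<forall>x\<in>b. h (k x) = k x)"
proof -
  have gs: "siso rar far g X X" and g_a: "\<forall>x\<in>a. g x = x"
    using g by (auto simp: pstab_def aut_group_carrier_iff)
  define A K1 K0 where "A = acl far X a" and "K1 = acl far X b" and "K0 = acl far X (b \<union> g ` b)"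
  have gb: "g ` b \<subseteq> sdom X" using siso_image[OF gs] b(2) by blast
  have gK1: "g ` K1 = acl far X (g ` b)"
    unfolding K1_def using embedding_image_acl[OF siso_embedding[OF gs] struct_limit b(2)] .
  have closed: "closed_under far X A" "closed_under far X K1" "closed_under far X (g ` K1)"
    "closed_under far X K0" unfolding gK1 unfolding A_def K1_def K0_def by (simp_all add: closed_under_acl)
  have "a \<subseteq> g ` b" using g_a ab by force
  then have sub: "A \<subseteq> K1" "K1 \<subseteq> K0" "g ` K1 \<subseteq> K0" "A \<subseteq> g ` K1" "K0 \<subseteq> sdom X"
    unfolding gK1 unfolding A_def K1_def K0_def
    using ab acl_subset_sdom[OF struct_limit] b(2) gb by (simp_all add: acl_mono)
  have "finite K0" unfolding K0_def using finite_acl_limit b gb by simp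
  moreover have "\<forall>x\<in>A. g x = x"
    unfolding A_def using siso_fixes_acl[OF gs struct_limit _ g_a] ab b(2) by blast
  ultimately obtain h k where hk: "h \<in> carrier (aut_group rar far X)" "k \<in> carrier (aut_group rar far X)"
      "\<forall>x\<in>K1. h x = g x" "\<forall>x\<in>A. k x = x" "\<forall>x\<in>K1. h (k x) = k x"
    using aut_pair_over_copy[OF _ sub(5) closed(4) closed(2) sub(2) closed(3) sub(3) closed(1)
        sub(1,4) gs] by blast
  have bK1: "b \<subseteq> K1" and aA: "a \<subseteq> A" unfolding K1_def A_def by (simp_all add: acl_superset)
  have "h \<in> pstab (aut_group rar far X) (\<lambda>g x. g x) a"
    using hk(1,3) g_a ab bK1 by (auto simp: pstab_def)
  moreover have "k \<in> pstab (aut_group rar far X) (\<lambda>g x. g x) a"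
    using hk(2,4) aA by (auto simp: pstab_def)
  ultimately show ?thesis using hk(3,5) bK1 by blast
qed

end

theorem mainTheorem14:
  fixes rar :: "'r \<Rightarrow> nat" and far :: "'f \<Rightarrow> nat"
    and F :: "(nat, 'r, 'f) struc set" and X :: "(nat, 'r, 'f) struc"
  assumes "fraisse_class rar far F"
    and "disjoint_amalgamation rar far F"
    and "hereditary_canonical_amalgamation rar far F"
    and "fraisse_limit rar far F X"
  shows "simple_dynamical_ideal (aut_group rar far X) (sdom X) (\<lambda>g x. g x)
           {a. finite a \<and> a \<subseteq> sdom X}"
proof -
  obtain C where "canonical_fraisse_class rar far F C"
    using ex_canonical_fraisse_class[OF assms(1,3)] by blast
  then interpret canonical_fraisse_limit rar far F C X
    using assms(4) by (simp add: canonical_fraisse_limit_def canonical_fraisse_limit_axioms_def)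
  show ?thesis
    using dynamical_ideal_finite_subsets[OF struct_limit] pstab_shift
    by (intro simple_dynamical_idealI) auto
qed

end
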